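(* Let $\underline c=(c_1,\dots,c_k)$ and $\underline d=(d_1,\dots,d_k)$ be lists of positive integers. Arrange them in the array whose top row is $d_1,\dots,d_k$ (positions $1,\dots,k$) and whose bottom row is $1,c_1,\dots,c_k$ (positions $0,1,\dots,k$). An allowable path is a path in this array starting at the entry $1$ in which each step is a right move (same row, position $+1$), an up-right move (from bottom row position $j$ to top row position $j+1$), or a down move (from top row position $j$ to bottom row position $j$); its associated integer is the product of all entries encountered along the path. Let $E$ be the set of integers associated to allowable paths ending at $c_k$ and $F$ the set of integers associated to allowable paths ending at $d_k$. Then \[Y_{\underline c,\underline d}=\frac{\gcd(E)}{\gcd(E\cup F)}.\]
   Context: For positive integers $x,y$, $(x,y)$ denotes the gcd and $x\colon y=x/(x,y)$. For lists $\underline c=(c_1,\dots,c_k)$, $\underline d=(d_1,\dots,d_k)$ of positive integers define recursively $Y_0=1$ and $Y_j=\big((c_jY_{j-1})\colon d_j,\ c_j\big)$ (a gcd) for $1\le j\le k$, and set $Y_{\underline c,\underline d}=Y_k$. *)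

theory Defs
  imports Complex_Main
begin

definition colon :: "nat \<Rightarrow> nat \<Rightarrow> nat" where
  "colon x y = x div gcd x y"

definition Ycd :: "nat list \<Rightarrow> nat list \<Rightarrow> nat" where
  "Ycd cs ds = foldl (\<lambda>y (cj, dj). gcd (colon (cj * y) dj) cj) 1 (zip cs ds)"

(* Array positions: (True, j) = top row position j (entry d_j, 1 <= j <= k);
   (False, j) = bottom row position j (entry 1 for j = 0, c_j for 1 <= j <= k). *)
type_synonym pos = "bool \<times> nat"

definition valid_pos :: "nat \<Rightarrow> pos \<Rightarrow> bool" where
  "valid_pos k p = (if fst p then 1 \<le> snd p \<and> snd p \<le> k else snd p \<le> k)"

definition entry :: "nat list \<Rightarrow> nat list \<Rightarrow> pos \<Rightarrow> nat" where
  "entry cs ds p = (if fst p then ds ! (snd p - 1)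
                    else if snd p = 0 then 1 else cs ! (snd p - 1))"

definition path_step :: "pos \<Rightarrow> pos \<Rightarrow> bool" where
  "path_step p q =
     ((fst q = fst p \<and> snd q = snd p + 1)
      \<or> (\<not> fst p \<and> fst q \<and> snd q = snd p + 1)
      \<or> (fst p \<and> \<not> fst q \<and> snd q = snd p))"

definition allowable_path :: "nat \<Rightarrow> pos list \<Rightarrow> bool" where
  "allowable_path k ps =
     (ps \<noteq> [] \<and> hd ps = (False, 0) \<and> (\<forall>p\<in>set ps. valid_pos k p)
      \<and> successively path_step ps)"

definition path_int :: "nat list \<Rightarrow> nat list \<Rightarrow> pos list \<Rightarrow> nat" where
  "path_int cs ds ps = prod_list (map (entry cs ds) ps)"

definition Eset :: "nat list \<Rightarrow> nat list \<Rightarrow> nat set" where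
  "Eset cs ds = {path_int cs ds ps | ps. allowable_path (length cs) ps
                                        \<and> last ps = (False, length cs)}"

definition Fset :: "nat list \<Rightarrow> nat list \<Rightarrow> nat set" where
  "Fset cs ds = {path_int cs ds ps | ps. allowable_path (length cs) ps
                                        \<and> last ps = (True, length cs)}"

end

theory Submission
  imports Defs
begin

text \<open>Let \<open>E\<^sub>j\<close> and \<open>F\<^sub>j\<close> be the gcds of the integers of allowable paths ending at the
  bottom, resp. top, entry of position \<open>j\<close> (with \<open>E\<^sub>0 = 1\<close>, \<open>F\<^sub>0 = gcd \<emptyset> = 0\<close>). The last step
  into top position \<open>j+1\<close> comes from position \<open>j\<close> of either row, and the last step into bottom
  position \<open>j+1\<close> comes from bottom position \<open>j\<close> or top position \<open>j+1\<close>; hence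
  \<open>F\<^sub>j\<^sub>+\<^sub>1 = d\<^sub>j\<^sub>+\<^sub>1 gcd(E\<^sub>j, F\<^sub>j)\<close> and \<open>E\<^sub>j\<^sub>+\<^sub>1 = c\<^sub>j\<^sub>+\<^sub>1 gcd(E\<^sub>j, F\<^sub>j\<^sub>+\<^sub>1)\<close>.
  The invariant \<open>E\<^sub>j = Y\<^sub>j gcd(E\<^sub>j, F\<^sub>j)\<close> then propagates by induction: both recurrences
  pull out the common factor \<open>gcd(E\<^sub>j, F\<^sub>j)\<close>, and what remains is the identity
  \<open>gcd((cY):d, c) \<cdot> gcd(c gcd(Y,d), d) = c gcd(Y,d)\<close>. Finally \<open>E\<^sub>k > 0\<close> since all \<open>c\<^sub>j > 0\<close>.\<close>

lemma Gcd_Un: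
  fixes A B :: "'a :: semiring_Gcd set"
  shows "Gcd (A \<union> B) = gcd (Gcd A) (Gcd B)"
  by (rule Gcd_eqI)
    (auto intro: Gcd_greatest dvd_trans[OF gcd_dvd1 Gcd_dvd] dvd_trans[OF gcd_dvd2 Gcd_dvd])

lemma Gcd_image_mult_right_nat: "Gcd ((\<lambda>x. x * c) ` A) = c * Gcd (A :: nat set)"
  using Gcd_mult[of c A] by (simp add: mult.commute)

lemma gcd_colon_mult_gcd:
  fixes Y c d :: nat
  shows "gcd (colon (c * Y) d) c * gcd (c * gcd Y d) d = c * gcd Y d"
proof -
  define u where "u = gcd (c * Y) d"
  have u_alt: "gcd (c * gcd Y d) d = u"
    unfolding u_def gcd_mult_distrib_nat gcd.assoc by (simp add: gcd_nat.absorb2)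
  have "gcd (c * Y div u) c * u = gcd (c * Y div u * u) (c * u)"
    by (simp add: gcd_mult_distrib_nat mult.commute)
  also have "c * Y div u * u = c * Y"
    by (simp add: u_def)
  also have "gcd (c * Y) (c * u) = c * gcd Y u"
    by (simp add: gcd_mult_distrib_nat)
  also have "gcd Y u = gcd Y d"
    unfolding u_def gcd.assoc[symmetric] by (simp add: gcd_nat.absorb1)
  finally show ?thesis
    by (simp add: colon_def u_alt u_def)
qed

lemma Ycd_snoc:
  "length cs = length ds \<Longrightarrow> Ycd (cs @ [c]) (ds @ [d]) = gcd (colon (c * Ycd cs ds) d) c"
  by (simp add: Ycd_def)

definition paths_to :: "nat \<Rightarrow> pos \<Rightarrow> pos list set" where
  "paths_to k q = {ps. allowable_path k ps \<and> last ps = q}"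

lemma allowable_path_snoc:
  "allowable_path k (ps @ [q]) \<longleftrightarrow>
     (if ps = [] then q = (False, 0) \<and> valid_pos k q
      else allowable_path k ps \<and> valid_pos k q \<and> path_step (last ps) q)"
  by (auto simp: allowable_path_def successively_append_iff)

lemma allowable_path_valid_last: "allowable_path k ps \<Longrightarrow> valid_pos k (last ps)"
  by (simp add: allowable_path_def)

lemma paths_to_start: "paths_to k (False, 0) = {[(False, 0)]}"
proof (intro equalityI subsetI)
  fix ps assume "ps \<in> paths_to k (False, 0)"
  then have ap: "allowable_path k ps" and ps_last: "last ps = (False, 0)"
    by (simp_all add: paths_to_def)
  then have "ps \<noteq> []" by (simp add: allowable_path_def)
  then obtain ps' where ps_eq: "ps = ps' @ [(False, 0)]"
    using ps_last by (metis append_butlast_last_id)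
  have "ps' = []"
  proof (rule ccontr)
    assume "ps' \<noteq> []"
    then have "allowable_path k ps'" "path_step (last ps') (False, 0)"
      using ap ps_eq by (simp_all add: allowable_path_snoc)
    then show False
      using allowable_path_valid_last[of k ps']
      by (cases "last ps'") (simp add: path_step_def valid_pos_def)
  qed
  then show "ps \<in> {[(False, 0)]}" using ps_eq by simp
next
  fix ps :: "pos list" assume "ps \<in> {[(False, 0)]}"
  then show "ps \<in> paths_to k (False, 0)"
    by (simp add: paths_to_def allowable_path_def valid_pos_def)
qed

lemma paths_to_step:
  assumes "valid_pos k q" and "q \<noteq> (False, 0)"
  shows "paths_to k q = (\<lambda>ps. ps @ [q]) ` (\<Union>p \<in> {p. path_step p q}. paths_to k p)"
proof (intro equalityI subsetI)
  fix ps assume "ps \<in> paths_to k q"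
  then have ap: "allowable_path k ps" and ps_last: "last ps = q"
    by (simp_all add: paths_to_def)
  then have "ps \<noteq> []" by (simp add: allowable_path_def)
  then obtain ps' where ps_eq: "ps = ps' @ [q]"
    using ps_last by (metis append_butlast_last_id)
  moreover have "ps' \<noteq> []"
    using ap ps_eq assms(2) by (auto simp: allowable_path_snoc)
  ultimately have "allowable_path k ps'" "path_step (last ps') q"
    using ap by (simp_all add: allowable_path_snoc)
  then have "ps' \<in> paths_to k (last ps')" "last ps' \<in> {p. path_step p q}"
    by (simp_all add: paths_to_def)
  then show "ps \<in> (\<lambda>ps. ps @ [q]) ` (\<Union>p \<in> {p. path_step p q}. paths_to k p)"
    using ps_eq by blast
next
  fix ps assume "ps \<in> (\<lambda>ps. ps @ [q]) ` (\<Union>p \<in> {p. path_step p q}. paths_to k p)"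
  then obtain ps' where "ps = ps' @ [q]" "path_step (last ps') q" "allowable_path k ps'"
    by (auto simp: paths_to_def)
  moreover from \<open>allowable_path k ps'\<close> have "ps' \<noteq> []"
    by (simp add: allowable_path_def)
  ultimately show "ps \<in> paths_to k q"
    using assms(1) by (simp add: paths_to_def allowable_path_snoc)
qed

lemma path_step_to_bottom_Suc: "path_step p (False, Suc j) \<longleftrightarrow> p = (False, j) \<or> p = (True, Suc j)"
  by (cases p) (auto simp: path_step_def)

lemma path_step_to_top_Suc: "path_step p (True, Suc j) \<longleftrightarrow> p = (False, j) \<or> p = (True, j)"
  by (cases p) (auto simp: path_step_def)

lemma paths_to_bottom_Suc:
  "j < k \<Longrightarrow> paths_to k (False, Suc j) =
     (\<lambda>ps. ps @ [(False, Suc j)]) ` (paths_to k (False, j) \<union> paths_to k (True, Suc j))"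
  by (subst paths_to_step) (auto simp: valid_pos_def path_step_to_bottom_Suc)

lemma paths_to_top_Suc:
  "j < k \<Longrightarrow> paths_to k (True, Suc j) =
     (\<lambda>ps. ps @ [(True, Suc j)]) ` (paths_to k (False, j) \<union> paths_to k (True, j))"
  by (subst paths_to_step) (auto simp: valid_pos_def path_step_to_top_Suc)

definition path_gcd :: "nat list \<Rightarrow> nat list \<Rightarrow> pos \<Rightarrow> nat" where
  "path_gcd cs ds q = Gcd (path_int cs ds ` paths_to (length cs) q)"

lemma Gcd_path_int_snoc:
  "Gcd (path_int cs ds ` (\<lambda>ps. ps @ [q]) ` (A \<union> B)) =
     entry cs ds q * gcd (Gcd (path_int cs ds ` A)) (Gcd (path_int cs ds ` B))"
proof -
  have "path_int cs ds ` (\<lambda>ps. ps @ [q]) ` (A \<union> B) =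
        (\<lambda>x. x * entry cs ds q) ` (path_int cs ds ` A \<union> path_int cs ds ` B)"
    by (auto simp: path_int_def image_image)
  then show ?thesis by (simp add: Gcd_image_mult_right_nat Gcd_Un)
qed

lemma path_gcd_start: "path_gcd cs ds (False, 0) = 1"
  by (simp add: path_gcd_def paths_to_start path_int_def entry_def)

lemma path_gcd_top_Suc:
  "j < length cs \<Longrightarrow> path_gcd cs ds (True, Suc j) =
     ds ! j * gcd (path_gcd cs ds (False, j)) (path_gcd cs ds (True, j))"
  by (simp add: path_gcd_def paths_to_top_Suc Gcd_path_int_snoc entry_def)

lemma path_gcd_bottom_Suc:
  "j < length cs \<Longrightarrow> path_gcd cs ds (False, Suc j) =
     cs ! j * gcd (path_gcd cs ds (False, j)) (path_gcd cs ds (True, Suc j))"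
  by (simp add: path_gcd_def paths_to_bottom_Suc Gcd_path_int_snoc entry_def)

lemma path_gcd_bottom_pos:
  assumes "\<forall>x\<in>set cs. x > 0" and "j \<le> length cs"
  shows "path_gcd cs ds (False, j) > 0"
  using assms(2)
proof (induction j)
  case 0
  then show ?case by (simp add: path_gcd_start)
next
  case (Suc j)
  then have "j < length cs" by simp
  then have "cs ! j > 0" using assms(1) by simp
  with Suc show ?case by (simp add: path_gcd_bottom_Suc)
qed

lemma Ycd_take_mult_gcd:
  assumes "length cs = length ds" and "j \<le> length cs"
  shows "Ycd (take j cs) (take j ds) * gcd (path_gcd cs ds (False, j)) (path_gcd cs ds (True, j))
           = path_gcd cs ds (False, j)"
  using assms(2)
proof (induction j)
  case 0
  then show ?case by (simp add: Ycd_def path_gcd_start)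
next
  case (Suc j)
  then have j: "j < length cs" by simp
  define Y where "Y = Ycd (take j cs) (take j ds)"
  define G where "G = gcd (path_gcd cs ds (False, j)) (path_gcd cs ds (True, j))"
  let ?c = "cs ! j" and ?d = "ds ! j"
  have E: "path_gcd cs ds (False, j) = Y * G"
    using Suc by (simp add: Y_def G_def)
  have F': "path_gcd cs ds (True, Suc j) = ?d * G"
    using j by (simp add: path_gcd_top_Suc G_def)
  have gcd_mult_G: "gcd (a * G) (b * G) = gcd a b * G" for a b
    by (metis gcd_mult_distrib_nat mult.commute)
  have E': "path_gcd cs ds (False, Suc j) = ?c * gcd Y ?d * G"
    unfolding path_gcd_bottom_Suc[OF j] E F' gcd_mult_G by (simp only: mult.assoc)
  have G': "gcd (path_gcd cs ds (False, Suc j)) (path_gcd cs ds (True, Suc j))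
              = gcd (?c * gcd Y ?d) ?d * G"
    unfolding E' F' by (rule gcd_mult_G)
  have Y': "Ycd (take (Suc j) cs) (take (Suc j) ds) = gcd (colon (?c * Y) ?d) ?c"
    using j assms(1) by (simp add: take_Suc_conv_app_nth Ycd_snoc Y_def)
  show ?case
    unfolding Y' G' unfolding E' by (simp only: mult.assoc[symmetric] gcd_colon_mult_gcd)
qed

theorem proposition7p14:
  fixes cs ds :: "nat list"
  assumes "length cs = length ds" and "length cs \<ge> 1"
    and "\<forall>x\<in>set cs. x > 0" and "\<forall>x\<in>set ds. x > 0"
  shows "real (Ycd cs ds) = real (Gcd (Eset cs ds)) / real (Gcd (Eset cs ds \<union> Fset cs ds))"
proof -
  let ?k = "length cs"
  define E where "E = path_gcd cs ds (False, ?k)"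
  define F where "F = path_gcd cs ds (True, ?k)"
  have "Gcd (Eset cs ds) = E" "Gcd (Eset cs ds \<union> Fset cs ds) = gcd E F"
    by (simp_all add: E_def F_def path_gcd_def paths_to_def Eset_def Fset_def Gcd_Un
        setcompr_eq_image)
  moreover have "Ycd cs ds * gcd E F = E"
    using Ycd_take_mult_gcd[OF assms(1) order_refl] assms(1) by (simp add: E_def F_def)
  moreover have "gcd E F > 0"
    using path_gcd_bottom_pos[OF assms(3) order_refl] by (simp add: E_def)
  ultimately show ?thesis
    by (simp add: eq_divide_eq flip: of_nat_mult)
qed

end
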